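(* Let $n\ge1$ and let $F\in\mathcal F$ be strictly increasing and continuously differentiable on its support. Define $d_1=\int_0^1F^{-1}(u)\,du$ and, for $i=2,\dots,n$, $$d_i=\min_{q\in[0,1]}\Big\{\int_0^qF^{-1}(u)\,du+(1-q)d_{i-1}\Big\}.$$ Then the minimum expected cost of an online algorithm for OSDC on the instance $(F,n)$ is attained and equals $\sum_{i=1}^n d_i$. (Here $d_i$ is the optimal expected value selected by an online algorithm that must select exactly one of $X_1,\dots,X_i$, minimizing the expected selected value.)
   Context: Let $\mathcal F$ be the family of CDFs of nonnegative random variables with finite mean. In the deferred-contracts model (OSDC) with instance $(F,n)$, $X_1,\dots,X_n$ are i.i.d. with CDF $F$, revealed one at a time; at time $i$, knowing $X_1,\dots,X_i$ and the last time $\ell\ge i-1$ already covered (initially $\ell=0$), an online algorithm chooses an integer $T_i\ge0$ covering times $\ell+1,\dots,\ell+T_i$ at cost $T_iX_i$, with $T_i\ge1$ forced when $\ell=i-1$. Its expected cost is $\mathbb E[\sum_{i=1}^nT_iX_i]$. *)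

theory Defs
  imports "HOL-Probability.Probability"
begin

definition cdf_support :: "(real \<Rightarrow> real) \<Rightarrow> real set" where
  "cdf_support F = {x. \<forall>e>0. F (x - e) < F (x + e)}"

(* Generalised inverse (quantile function) F^{-1}(u) = inf {x. F x \<ge> u}. *)
definition quantile :: "(real \<Rightarrow> real) \<Rightarrow> real \<Rightarrow> real" where
  "quantile F u = Inf {x. u \<le> F x}"

(* d_1 = int_0^1 F^{-1}, d_{i} = min_{q in [0,1]} (int_0^q F^{-1} + (1-q) d_{i-1}).
   Indices 1..n; d 0 is an irrelevant dummy value. *)
fun dval :: "(real \<Rightarrow> real) \<Rightarrow> nat \<Rightarrow> real" where
  "dval F 0 = 0"
| "dval F (Suc 0) = (LBINT u=0..1. quantile F u)"
| "dval F (Suc (Suc i)) =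
     (INF q\<in>{0..1}. (LBINT u=0..q. quantile F u) + (1 - q) * dval F (Suc i))"

(* Deterministic online policy for OSDC on times 1..n.
   pol i x l = T_i, chosen at time i having seen x 1, ..., x i, with l the last covered time. *)
type_synonym policy = "nat \<Rightarrow> (nat \<Rightarrow> real) \<Rightarrow> nat \<Rightarrow> nat"

fun covered :: "policy \<Rightarrow> (nat \<Rightarrow> real) \<Rightarrow> nat \<Rightarrow> nat" where
  "covered pol x 0 = 0"
| "covered pol x (Suc i) = covered pol x i + pol (Suc i) x (covered pol x i)"

definition osdc_cost :: "policy \<Rightarrow> nat \<Rightarrow> (nat \<Rightarrow> real) \<Rightarrow> real" where
  "osdc_cost pol n x = (\<Sum>i=1..n. real (pol i x (covered pol x (i - 1))) * x i)"

definition iid_space :: "real measure \<Rightarrow> nat \<Rightarrow> (nat \<Rightarrow> real) measure" where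
  "iid_space D n = PiM {1..n} (\<lambda>_. D)"

definition online_alg :: "real measure \<Rightarrow> nat \<Rightarrow> policy \<Rightarrow> bool" where
  "online_alg D n pol \<longleftrightarrow>
     (\<forall>i\<in>{1..n}. \<forall>l x y. (\<forall>j\<in>{1..i}. x j = y j) \<longrightarrow> pol i x l = pol i y l) \<and>
     (\<forall>i\<in>{1..n}. \<forall>l. (\<lambda>x. pol i x l) \<in> measurable (iid_space D n) (count_space UNIV)) \<and>
     (\<forall>i\<in>{1..n}. \<forall>x. 1 \<le> pol i x (i - 1))"

definition expected_cost :: "real measure \<Rightarrow> nat \<Rightarrow> policy \<Rightarrow> ennreal" where
  "expected_cost D n pol = (\<integral>\<^sup>+ x. ennreal (osdc_cost pol n x) \<partial>iid_space D n)"

end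

theory Submission
  imports Defs
begin

text \<open>
  Every time \<open>t\<close> is paid for by exactly one of \<open>X\<^sub>1, ..., X\<^sub>t\<close>, the one whose contract
  covers it. Without the requirement that a contract covers consecutive times, the problem would
  split into independent problems of selecting one of \<open>k\<close> draws, with optimal values
  \<open>d\<^sub>1 = E X\<close> and \<open>d\<^bsub>k+1\<^esub> = E min(X, d\<^sub>k)\<close>; the latter is the defining formula of
  \<open>d\<^bsub>k+1\<^esub>\<close>, since by the quantile transform the minimum over \<open>q\<close> is attained at
  \<open>q = F(d\<^sub>k)\<close>. Backward induction thus bounds the expected remaining cost of any online
  algorithm at time \<open>i\<close>, with times up to \<open>l\<close> covered, from below by the sum of
  \<open>d\<^bsub>t-i+1\<^esub>\<close> over the uncovered times \<open>t > l\<close>. The threshold rule that, on seeing \<open>X\<^sub>i\<close>,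
  covers the uncovered times \<open>t\<close> with \<open>X\<^sub>i \<le> d\<^bsub>t-i\<^esub>\<close> (and time \<open>i\<close> if still uncovered)
  attains this bound, and since \<open>d\<close> is decreasing these times form an interval, so the rule
  buys a single contract.
\<close>

section \<open>Iterated integrals over finite products\<close>

primrec iter_nn_integral ::
  "'a measure \<Rightarrow> nat list \<Rightarrow> ((nat \<Rightarrow> 'a) \<Rightarrow> ennreal) \<Rightarrow> (nat \<Rightarrow> 'a) \<Rightarrow> ennreal" where
  "iter_nn_integral M [] f x = f x"
| "iter_nn_integral M (i # is) f x = (\<integral>\<^sup>+ y. iter_nn_integral M is f (x(i := y)) \<partial>M)"

lemma (in sigma_finite_measure) iter_nn_integral_eq_nn_integral_PiM:
  assumes "distinct is" "finite A" "A \<inter> set is = {}" "x \<in> space (PiM A (\<lambda>_. M))"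
    and "f \<in> borel_measurable (PiM (A \<union> set is) (\<lambda>_. M))"
  shows "iter_nn_integral M is f x = (\<integral>\<^sup>+ y. f (merge A (set is) (x, y)) \<partial>PiM (set is) (\<lambda>_. M))"
  using assms
proof (induction "is" arbitrary: A x)
  case Nil
  interpret product_sigma_finite "\<lambda>_. M"
    by (simp add: product_sigma_finite_def sigma_finite_measure_axioms)
  have "merge A {} (x, \<lambda>_. undefined) = x"
    using Nil(4) by (auto simp: merge_def space_PiM PiE_def extensional_def)
  then show ?case by (simp add: nn_integral_empty)
next
  case (Cons i "is")
  interpret product_sigma_finite "\<lambda>_. M"
    by (simp add: product_sigma_finite_def sigma_finite_measure_axioms)
  have i: "i \<notin> A" "i \<notin> set is" using Cons.prems by auto
  have "(\<lambda>w. merge A (insert i (set is)) (x, w))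
      \<in> measurable (PiM (insert i (set is)) (\<lambda>_. M)) (PiM (A \<union> insert i (set is)) (\<lambda>_. M))"
    by (rule measurable_compose[OF _ measurable_merge]) (use Cons.prems in auto)
  moreover have "f \<in> borel_measurable (PiM (A \<union> insert i (set is)) (\<lambda>_. M))"
    using Cons.prems(5) by simp
  ultimately have f_merge: "(\<lambda>w. f (merge A (insert i (set is)) (x, w)))
      \<in> borel_measurable (PiM (insert i (set is)) (\<lambda>_. M))"
    by (rule measurable_compose)
  have "(\<integral>\<^sup>+ w. f (merge A (insert i (set is)) (x, w)) \<partial>PiM (insert i (set is)) (\<lambda>_. M))
     = (\<integral>\<^sup>+ y. (\<integral>\<^sup>+ z. f (merge A (insert i (set is)) (x, z(i := y))) \<partial>PiM (set is) (\<lambda>_. M)) \<partial>M)"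
    by (rule product_nn_integral_insert_rev[OF _ _ f_merge]) (simp_all add: i)
  also have "\<dots> = (\<integral>\<^sup>+ y. iter_nn_integral M is f (x(i := y)) \<partial>M)"
  proof (rule nn_integral_cong)
    fix y assume "y \<in> space M"
    then have "iter_nn_integral M is f (x(i := y))
        = (\<integral>\<^sup>+ z. f (merge (insert i A) (set is) (x(i := y), z)) \<partial>PiM (set is) (\<lambda>_. M))"
      using Cons.prems by (intro Cons.IH) (auto simp: space_PiM PiE_def extensional_def)
    also have "\<dots> = (\<integral>\<^sup>+ z. f (merge A (insert i (set is)) (x, z(i := y))) \<partial>PiM (set is) (\<lambda>_. M))"
      using i by (intro nn_integral_cong) (auto simp: merge_def intro!: arg_cong[where f=f])
    finally show "(\<integral>\<^sup>+ z. f (merge A (insert i (set is)) (x, z(i := y))) \<partial>PiM (set is) (\<lambda>_. M))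
        = iter_nn_integral M is f (x(i := y))" ..
  qed
  finally show ?case by simp
qed

lemma (in sigma_finite_measure) nn_integral_PiM_eq_iter_nn_integral:
  assumes "distinct is" "f \<in> borel_measurable (PiM (set is) (\<lambda>_. M))"
  shows "(\<integral>\<^sup>+ x. f x \<partial>PiM (set is) (\<lambda>_. M)) = iter_nn_integral M is f (\<lambda>_. undefined)"
proof -
  have "iter_nn_integral M is f (\<lambda>_. undefined)
      = (\<integral>\<^sup>+ y. f (merge {} (set is) (\<lambda>_. undefined, y)) \<partial>PiM (set is) (\<lambda>_. M))"
    using assms by (intro iter_nn_integral_eq_nn_integral_PiM) (simp_all add: space_PiM_empty)
  also have "\<dots> = (\<integral>\<^sup>+ y. f y \<partial>PiM (set is) (\<lambda>_. M))"
    by (rule nn_integral_cong) (auto simp: merge_def space_PiM PiE_def extensional_def intro!: arg_cong[where f=f])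
  finally show ?thesis ..
qed

text \<open>\<open>R\<close> is instantiated with \<open>(\<le>)\<close> and with \<open>(=)\<close>; \<open>P\<close> is an almost surely preserved
  invariant of the coordinates revealed so far.\<close>

lemma iter_nn_integral_upt_induct:
  assumes "reflp R" "transp R"
    and R_nn_integral: "\<And>f g. AE y in M. R (f y) (g y) \<Longrightarrow> R (\<integral>\<^sup>+ y. f y \<partial>M) (\<integral>\<^sup>+ y. g y \<partial>M)"
    and R_step: "\<And>i x. m \<le> i \<Longrightarrow> i \<le> n \<Longrightarrow> P i x \<Longrightarrow> R (W i x) (\<integral>\<^sup>+ y. W (Suc i) (x(i := y)) \<partial>M)"
    and invariant: "\<And>i x. m \<le> i \<Longrightarrow> i \<le> n \<Longrightarrow> P i x \<Longrightarrow> AE y in M. P (Suc i) (x(i := y))"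
    and "m \<le> Suc n" "P m x"
  shows "R (W m x) (iter_nn_integral M [m..<Suc n] (W (Suc n)) x)"
  using \<open>m \<le> Suc n\<close> \<open>P m x\<close>
proof (induction m arbitrary: x rule: inc_induct)
  case base
  then show ?case using \<open>reflp R\<close> by (simp add: reflpD)
next
  case (step m)
  have "AE y in M. P (Suc m) (x(m := y))"
    using invariant step.hyps step.prems by simp
  then have "AE y in M. R (W (Suc m) (x(m := y)))
      (iter_nn_integral M [Suc m..<Suc n] (W (Suc n)) (x(m := y)))"
    by (rule eventually_mono) (rule step.IH)
  then have "R (\<integral>\<^sup>+ y. W (Suc m) (x(m := y)) \<partial>M) (iter_nn_integral M [m..<Suc n] (W (Suc n)) x)"
    using step.hyps by (simp add: upt_conv_Cons del: upt_Suc) (rule R_nn_integral)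
  moreover have "R (W m x) (\<integral>\<^sup>+ y. W (Suc m) (x(m := y)) \<partial>M)"
    using step.hyps step.prems by (intro R_step) auto
  ultimately show ?case
    using \<open>transp R\<close> by (blast dest: transpD)
qed

section \<open>Quantile representation of the selection values\<close>

lemma interval_lebesgue_integral_zero_eq:
  fixes f :: "real \<Rightarrow> real" and q :: real
  assumes "0 \<le> q"
  shows "(LBINT u=0..q. f u) = (\<integral>\<omega>. indicator {0<..<q} \<omega> * f \<omega> \<partial>lborel)"
proof -
  have "einterval 0 (ereal q) = {0<..<q}" by (auto simp: einterval_def zero_ereal_def)
  then show ?thesis
    using assms by (simp add: interval_lebesgue_integral_def set_lebesgue_integral_def zero_ereal_def)
qed

context cdf_distribution
begin

lemma quantile_cdf_eq_I: "quantile C = I"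
  by (simp add: quantile_def[abs_def])

lemma
  fixes g :: "real \<Rightarrow> real"
  assumes "g \<in> borel_measurable borel" "integrable M g"
  shows integrable_quantile_cdf: "integrable lborel (\<lambda>\<omega>. indicator {0<..<1} \<omega> * g (quantile C \<omega>))"
    and integral_quantile_cdf: "(\<integral>x. g x \<partial>M) = (\<integral>\<omega>. indicator {0<..<1} \<omega> * g (quantile C \<omega>) \<partial>lborel)"
proof -
  have sets_eq: "sets (restrict_space lborel {0<..<1::real}) = sets (restrict_space borel {0<..<1})"
    by (rule sets_restrict_space_cong) simp
  have Q_meas: "quantile C \<in> borel_measurable (restrict_space lborel {0<..<1})"
    unfolding quantile_cdf_eq_I using measurable_CI measurable_cong_sets[OF sets_eq refl] by simp
  have Q_distr: "distr (restrict_space lborel {0<..<1::real}) borel (quantile C) = M"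
    unfolding quantile_cdf_eq_I by (rule distr_I_eq_M)
  have "integrable (restrict_space lborel {0<..<1::real}) (\<lambda>\<omega>. g (quantile C \<omega>))"
    using integrable_distr_eq[OF Q_meas assms(1)] assms(2) Q_distr by simp
  then show "integrable lborel (\<lambda>\<omega>. indicator {0<..<1} \<omega> * g (quantile C \<omega>))"
    by (subst (asm) integrable_restrict_space) auto
  have "(\<integral>x. g x \<partial>M) = (\<integral>\<omega>. g (quantile C \<omega>) \<partial>restrict_space lborel {0<..<1::real})"
    using integral_distr[OF Q_meas assms(1)] Q_distr by simp
  also have "\<dots> = (\<integral>\<omega>. indicator {0<..<1} \<omega> * g (quantile C \<omega>) \<partial>lborel)"
    by (subst integral_restrict_space) auto
  finally show "(\<integral>x. g x \<partial>M) = (\<integral>\<omega>. indicator {0<..<1} \<omega> * g (quantile C \<omega>) \<partial>lborel)" .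
qed

lemma quantile_cdf_le_iff: "0 < \<omega> \<Longrightarrow> \<omega> < 1 \<Longrightarrow> quantile C \<omega> \<le> x \<longleftrightarrow> \<omega> \<le> C x"
  unfolding quantile_cdf_eq_I by (rule pseudoinverse[symmetric])

lemma
  assumes int: "integrable M (\<lambda>x. x)" and q: "0 \<le> q" "q \<le> 1"
  shows integrable_quantile_mix:
      "integrable lborel (\<lambda>\<omega>. indicator {0<..<q} \<omega> * quantile C \<omega> + indicator {q<..<1} \<omega> * c)"
    and LBINT_quantile_plus_eq_integral:
      "(LBINT u=0..q. quantile C u) + (1 - q) * c
        = (\<integral>\<omega>. indicator {0<..<q} \<omega> * quantile C \<omega> + indicator {q<..<1} \<omega> * c \<partial>lborel)"
proof -
  have "integrable lborel (\<lambda>\<omega>. indicator {0<..<q} \<omega> *\<^sub>R (indicator {0<..<1} \<omega> * quantile C \<omega>))"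
    by (rule integrable_mult_indicator) (use integrable_quantile_cdf[OF _ int] in simp_all)
  moreover have "indicator {0<..<q} \<omega> *\<^sub>R (indicator {0<..<1} \<omega> * quantile C \<omega>)
      = indicator {0<..<q} \<omega> * quantile C \<omega>" for \<omega> :: real
    using q by (auto simp: indicator_def)
  ultimately have int_low: "integrable lborel (\<lambda>\<omega>. indicator {0<..<q} \<omega> * quantile C \<omega>)"
    by (simp only:)
  have int_high: "integrable lborel (\<lambda>\<omega>. indicator {q<..<1::real} \<omega> * c)"
    by (intro integrable_mult_left integrable_real_indicator) (use q in auto)
  show "integrable lborel (\<lambda>\<omega>. indicator {0<..<q} \<omega> * quantile C \<omega> + indicator {q<..<1} \<omega> * c)"
    using int_low int_high by simp
  have integral_high: "(\<integral>\<omega>. indicator {q<..<1::real} \<omega> * c \<partial>lborel) = (1 - q) * c"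
    using q by simp
  show "(LBINT u=0..q. quantile C u) + (1 - q) * c
      = (\<integral>\<omega>. indicator {0<..<q} \<omega> * quantile C \<omega> + indicator {q<..<1} \<omega> * c \<partial>lborel)"
    unfolding interval_lebesgue_integral_zero_eq[OF q(1)]
      Bochner_Integration.integral_add[OF int_low int_high] integral_high ..
qed

text \<open>The infimum is attained at \<open>q = C c\<close>, because \<open>quantile C \<omega> \<le> c \<longleftrightarrow> \<omega> \<le> C c\<close>
  for \<open>0 < \<omega> < 1\<close>.\<close>

lemma INF_LBINT_quantile_eq_integral_min:
  assumes int: "integrable M (\<lambda>x. x)"
  shows "(INF q\<in>{0..1}. (LBINT u=0..q. quantile C u) + (1 - q) * c) = (\<integral>x. min x c \<partial>M)"
proof -
  let ?G = "\<lambda>q. (LBINT u=0..q. quantile C u) + (1 - q) * c"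
  let ?mix = "\<lambda>q \<omega>. indicator {0<..<q} \<omega> * quantile C \<omega> + indicator {q<..<1} \<omega> * c"
  have "integrable M (\<lambda>x. min x c)" using int by auto
  then have E: "(\<integral>x. min x c \<partial>M) = (\<integral>\<omega>. indicator {0<..<1} \<omega> * min (quantile C \<omega>) c \<partial>lborel)"
    and int_E: "integrable lborel (\<lambda>\<omega>. indicator {0<..<1} \<omega> * min (quantile C \<omega>) c)"
    using integral_quantile_cdf integrable_quantile_cdf by auto
  have lower: "(\<integral>x. min x c \<partial>M) \<le> ?G q" if q: "0 \<le> q" "q \<le> 1" for q
  proof -
    have "AE \<omega> in lborel. indicator {0<..<1} \<omega> * min (quantile C \<omega>) c \<le> ?mix q \<omega>"
      using AE_lborel_singleton[of q] by eventually_elim (use q in \<open>auto simp: indicator_def\<close>)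
    then show ?thesis
      unfolding E LBINT_quantile_plus_eq_integral[OF int q]
      by (rule integral_mono_AE[OF int_E integrable_quantile_mix[OF int q]])
  qed
  have q0: "0 \<le> C c" "C c \<le> 1" by (auto simp: cdf_nonneg cdf_bounded_prob)
  have "AE \<omega> in lborel. indicator {0<..<1} \<omega> * min (quantile C \<omega>) c = ?mix (C c) \<omega>"
    using AE_lborel_singleton[of "C c"]
  proof eventually_elim
    case (elim \<omega>)
    then show ?case
      using quantile_cdf_le_iff[of \<omega> c] q0 by (cases "0 < \<omega> \<and> \<omega> < 1") (auto simp: indicator_def)
  qed
  then have attained: "(\<integral>x. min x c \<partial>M) = ?G (C c)"
    unfolding E LBINT_quantile_plus_eq_integral[OF int q0]
    by (intro integral_cong_AE) (use int_E integrable_quantile_mix[OF int q0] in \<open>simp_all add: borel_measurable_integrable\<close>)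
  have "bdd_below (?G ` {0..1})"
    using lower by (intro bdd_belowI2) auto
  then have "(INF q\<in>{0..1}. ?G q) \<le> ?G (C c)"
    using q0 by (intro cINF_lower) auto
  moreover have "(\<integral>x. min x c \<partial>M) \<le> (INF q\<in>{0..1}. ?G q)"
    using lower by (intro cINF_greatest) auto
  ultimately show ?thesis
    using attained by simp
qed

lemma dval_cdf_Suc_0:
  assumes "integrable M (\<lambda>x. x)"
  shows "dval C (Suc 0) = (\<integral>x. x \<partial>M)"
  using interval_lebesgue_integral_zero_eq[of 1] integral_quantile_cdf[OF _ assms]
  by (simp add: one_ereal_def)

lemma dval_cdf_Suc_Suc:
  assumes "integrable M (\<lambda>x. x)"
  shows "dval C (Suc (Suc k)) = (\<integral>x. min x (dval C (Suc k)) \<partial>M)"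
  using INF_LBINT_quantile_eq_integral_min[OF assms] by simp

end

section \<open>Residual costs of the single-time problems\<close>

text \<open>Once \<open>X\<^sub>i = y\<close> is seen, an uncovered time \<open>t \<ge> i\<close> is paid either now at price \<open>y\<close>
  or later by the best of the \<open>t - i\<close> remaining draws, with value \<open>e (t - i)\<close>; time \<open>i\<close>
  itself must be paid now.\<close>

definition residual_cost :: "(nat \<Rightarrow> real) \<Rightarrow> nat \<Rightarrow> nat \<Rightarrow> real \<Rightarrow> real" where
  "residual_cost e i t y = (if t = i then y else min y (e (t - i)))"

definition cost_to_go :: "(nat \<Rightarrow> real) \<Rightarrow> nat \<Rightarrow> nat \<Rightarrow> nat \<Rightarrow> real" where
  "cost_to_go e n i l = (\<Sum>t\<in>{l<..n}. e (Suc t - i))"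

lemma sum_greaterThanAtMost_split:
  fixes f :: "nat \<Rightarrow> real"
  assumes "l \<le> m"
  shows "(\<Sum>t\<in>{l<..n}. f t) = (\<Sum>t\<in>{l<..min m n}. f t) + (\<Sum>t\<in>{m<..n}. f t)"
proof -
  have "{l<..n} = {l<..min m n} \<union> {m<..n}" "{l<..min m n} \<inter> {m<..n} = {}"
    using assms by auto
  then show ?thesis by (simp add: sum.union_disjoint)
qed

lemma greaterThanAtMost_eq_downward_closed:
  fixes S :: "nat set"
  assumes "S \<subseteq> {l<..n}" and closed: "\<And>s t. t \<in> S \<Longrightarrow> l < s \<Longrightarrow> s \<le> t \<Longrightarrow> s \<in> S"
  shows "S = {l<..l + card S}"
proof (cases "S = {}")
  case False
  have "finite S" using assms(1) finite_subset by blast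
  then have Max: "Max S \<in> S" "\<And>s. s \<in> S \<Longrightarrow> s \<le> Max S" using False by auto
  have S_eq: "S = {l<..Max S}"
  proof (intro equalityI subsetI)
    show "s \<in> {l<..Max S}" if "s \<in> S" for s using that Max(2) assms(1) by auto
    show "s \<in> S" if "s \<in> {l<..Max S}" for s using that closed[OF Max(1)] by simp
  qed
  have "l < Max S" using Max(1) assms(1) by auto
  moreover have "card S = Max S - l" using S_eq by (metis card_greaterThanAtMost)
  ultimately have "l + card S = Max S" by simp
  then show ?thesis using S_eq by (simp only:)
qed simp

lemma sum_residual_cost_le:
  assumes "i \<le> Suc l" "i = Suc l \<Longrightarrow> 1 \<le> T" "0 \<le> y"
  shows "(\<Sum>t\<in>{l<..n}. residual_cost e i t y) \<le> real T * y + cost_to_go e n (Suc i) (l + T)"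
proof -
  have "(\<Sum>t\<in>{l<..min (l + T) n}. residual_cost e i t y) \<le> (\<Sum>t\<in>{l<..min (l + T) n}. y)"
    by (intro sum_mono) (simp add: residual_cost_def)
  also have "\<dots> = real (min (l + T) n - l) * y"
    by simp
  also have "\<dots> \<le> real T * y"
    using \<open>0 \<le> y\<close> by (intro mult_right_mono) auto
  finally have now: "(\<Sum>t\<in>{l<..min (l + T) n}. residual_cost e i t y) \<le> real T * y" .
  have later: "(\<Sum>t\<in>{l + T<..n}. residual_cost e i t y) \<le> cost_to_go e n (Suc i) (l + T)"
    unfolding cost_to_go_def
  proof (intro sum_mono)
    fix t assume "t \<in> {l + T<..n}"
    then have "t \<noteq> i" using assms(1,2) by (cases "i = Suc l") auto
    then show "residual_cost e i t y \<le> e (Suc t - Suc i)" by (simp add: residual_cost_def)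
  qed
  show ?thesis
    using sum_greaterThanAtMost_split[of l "l + T" "\<lambda>t. residual_cost e i t y" n] now later by simp
qed

text \<open>For antitone \<open>e\<close>, the times with \<open>y \<le> e (t - i)\<close> form an initial segment, so the
  greedy choice of every single-time problem is realised by covering them with one contract.\<close>

lemma sum_residual_cost_threshold:
  fixes e :: "nat \<Rightarrow> real" and y :: real and n :: nat
  assumes antitone: "\<And>a b. 0 < a \<Longrightarrow> a \<le> b \<Longrightarrow> e b \<le> e a" and "i \<le> Suc l"
  defines "S \<equiv> {t\<in>{l<..n}. t = i \<or> y \<le> e (t - i)}"
  shows "(\<Sum>t\<in>{l<..n}. residual_cost e i t y) = real (card S) * y + cost_to_go e n (Suc i) (l + card S)"
proof -
  have S_sub: "S \<subseteq> {l<..n}"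
    by (auto simp: S_def)
  define k where "k = card S"
  have S_eq: "S = {l<..l + k}"
    unfolding k_def
  proof (rule greaterThanAtMost_eq_downward_closed[OF S_sub])
    fix s t assume "t \<in> S" "l < s" "s \<le> t"
    moreover have "y \<le> e (s - i)" if "s \<noteq> i"
    proof -
      have "t \<noteq> i" "i < s" using that \<open>l < s\<close> \<open>s \<le> t\<close> \<open>i \<le> Suc l\<close> by auto
      then have "y \<le> e (t - i)" using \<open>t \<in> S\<close> by (auto simp: S_def)
      also have "\<dots> \<le> e (s - i)" using \<open>i < s\<close> \<open>s \<le> t\<close> by (intro antitone) auto
      finally show ?thesis .
    qed
    ultimately show "s \<in> S" by (auto simp: S_def)
  qed
  have "{l<..min (l + k) n} = {l<..l + k} \<inter> {l<..n}"
    by auto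
  also have "\<dots> = S"
    using S_sub unfolding S_eq by blast
  finally have S_interval: "{l<..min (l + k) n} = S" .
  have "(\<Sum>t\<in>S. residual_cost e i t y) = (\<Sum>t\<in>S. y)"
    by (rule sum.cong) (auto simp: S_def residual_cost_def)
  then have now: "(\<Sum>t\<in>S. residual_cost e i t y) = real k * y"
    by (simp add: k_def)
  have later: "(\<Sum>t\<in>{l + k<..n}. residual_cost e i t y) = cost_to_go e n (Suc i) (l + k)"
    unfolding cost_to_go_def
  proof (rule sum.cong)
    fix t assume t: "t \<in> {l + k<..n}"
    then have "t \<notin> S" using S_eq by auto
    then show "residual_cost e i t y = e (Suc t - Suc i)"
      using t by (auto simp: S_def residual_cost_def)
  qed simp
  have "(\<Sum>t\<in>{l<..n}. residual_cost e i t y)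
      = (\<Sum>t\<in>{l<..min (l + k) n}. residual_cost e i t y) + (\<Sum>t\<in>{l + k<..n}. residual_cost e i t y)"
    by (rule sum_greaterThanAtMost_split) simp
  also have "\<dots> = real k * y + cost_to_go e n (Suc i) (l + k)"
    unfolding S_interval now later ..
  finally show ?thesis
    unfolding k_def .
qed

section \<open>Online algorithms and their measurability\<close>

lemma
  assumes "online_alg D n pol" "i \<in> {1..n}"
  shows online_alg_forced: "1 \<le> pol i x (i - 1)"
    and online_alg_nonanticipating: "\<forall>j\<in>{1..i}. x j = y j \<Longrightarrow> pol i x l = pol i y l"
    and online_alg_measurable: "(\<lambda>x. pol i x l) \<in> measurable (iid_space D n) (count_space UNIV)"
  using assms by (auto simp: online_alg_def)

lemma covered_ge:
  assumes "online_alg D n pol" "k \<le> n"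
  shows "k \<le> covered pol x k"
  using \<open>k \<le> n\<close>
proof (induction k)
  case (Suc k)
  then have "k \<le> covered pol x k" by simp
  moreover have "1 \<le> pol (Suc k) x k"
    using online_alg_forced[OF assms(1), of "Suc k"] Suc.prems by simp
  ultimately show ?case
    by (cases "covered pol x k = k") auto
qed simp

lemma le_Suc_covered:
  assumes "online_alg D n pol" "i \<in> {1..n}"
  shows "i \<le> Suc (covered pol x (i - 1))"
proof -
  have "i - 1 \<le> covered pol x (i - 1)"
    by (rule covered_ge[OF assms(1)]) (use assms(2) in auto)
  then show ?thesis by linarith
qed

lemma covered_cong:
  assumes "online_alg D n pol" "k \<le> n" "\<forall>j\<in>{1..k}. x j = y j"
  shows "covered pol x k = covered pol y k"
  using assms(2,3)
proof (induction k)
  case (Suc k)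
  have "pol (Suc k) x l = pol (Suc k) y l" for l
    using online_alg_nonanticipating[OF assms(1), of "Suc k"] Suc.prems by simp
  then show ?case using Suc by simp
qed simp

definition cost_before :: "policy \<Rightarrow> nat \<Rightarrow> (nat \<Rightarrow> real) \<Rightarrow> real" where
  "cost_before pol i x = (\<Sum>j\<in>{1..<i}. real (pol j x (covered pol x (j - 1))) * x j)"

lemma osdc_cost_eq_cost_before: "osdc_cost pol n x = cost_before pol (Suc n) x"
  unfolding osdc_cost_def cost_before_def by (simp add: atLeastLessThanSuc_atLeastAtMost)

lemma cost_before_nonneg: "\<forall>j\<in>{1..<i}. 0 \<le> x j \<Longrightarrow> 0 \<le> cost_before pol i x"
  unfolding cost_before_def by (intro sum_nonneg) auto

lemma
  fixes x :: "nat \<Rightarrow> real" and y :: real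
  assumes "online_alg D n pol" "i \<in> {1..n}"
  defines "l \<equiv> covered pol x (i - 1)"
  defines "T \<equiv> pol i (x(i := y)) l"
  shows covered_fun_upd: "covered pol (x(i := y)) i = l + T"
    and cost_before_fun_upd: "cost_before pol (Suc i) (x(i := y)) = cost_before pol i x + real T * y"
proof -
  have past: "covered pol (x(i := y)) k = covered pol x k" if "k < i" for k
    using covered_cong[OF assms(1), of k "x(i := y)" x] that assms(2) by auto
  obtain k where k: "i = Suc k" using assms(2) by (cases i) auto
  then have "covered pol (x(i := y)) i = covered pol (x(i := y)) k + pol i (x(i := y)) (covered pol (x(i := y)) k)"
    by simp
  then show "covered pol (x(i := y)) i = l + T"
    using past[of k] k by (simp add: l_def T_def)
  have "real (pol j (x(i := y)) (covered pol (x(i := y)) (j - 1))) * (x(i := y)) j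
      = real (pol j x (covered pol x (j - 1))) * x j" if "j \<in> {1..<i}" for j
  proof -
    have "pol j (x(i := y)) l' = pol j x l'" for l'
      using online_alg_nonanticipating[OF assms(1), of j] assms(2) that by simp
    moreover have "covered pol (x(i := y)) (j - 1) = covered pol x (j - 1)"
      using that by (intro past) auto
    ultimately show ?thesis using that by simp
  qed
  then have "cost_before pol i (x(i := y)) = cost_before pol i x"
    unfolding cost_before_def by (intro sum.cong) auto
  moreover have "cost_before pol (Suc i) (x(i := y))
      = cost_before pol i (x(i := y)) + real (pol i (x(i := y)) (covered pol (x(i := y)) (i - 1))) * y"
    unfolding cost_before_def using assms(2) by (simp add: atLeastLessThanSuc)
  ultimately show "cost_before pol (Suc i) (x(i := y)) = cost_before pol i x + real T * y"
    using past[of "i - 1"] assms(2) by (simp add: l_def T_def)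
qed

lemma measurable_covered:
  assumes "online_alg D n pol" "k \<le> n"
  shows "(\<lambda>x. covered pol x k) \<in> measurable (iid_space D n) (count_space UNIV)"
  using \<open>k \<le> n\<close>
proof (induction k)
  case (Suc k)
  have "(\<lambda>x. pol (Suc k) x l) \<in> measurable (iid_space D n) (count_space UNIV)" for l
    using online_alg_measurable[OF assms(1)] Suc.prems by simp
  then have "(\<lambda>x. l + pol (Suc k) x l) \<in> measurable (iid_space D n) (count_space UNIV)" for l
    by (rule measurable_compose) simp
  then have "(\<lambda>x. (\<lambda>l x. l + pol (Suc k) x l) (covered pol x k) x) \<in> measurable (iid_space D n) (count_space UNIV)"
    by (rule measurable_compose_countable) (use Suc in simp)
  then show ?case by simp
qed simp

definition threshold_policy :: "(nat \<Rightarrow> real) \<Rightarrow> nat \<Rightarrow> policy" where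
  "threshold_policy e n i x l = card {t\<in>{l<..n}. t = i \<or> x i \<le> e (t - i)}"

context real_distribution
begin

lemma measurable_component_iid_space:
  assumes "i \<in> {1..n}"
  shows "(\<lambda>x. x i) \<in> borel_measurable (iid_space M n)"
proof -
  have "(\<lambda>x. x i) \<in> measurable (iid_space M n) M"
    unfolding iid_space_def by (rule measurable_component_singleton) (use assms in auto)
  then show ?thesis by (simp add: measurable_cong_sets[OF refl events_eq_borel])
qed

lemma borel_measurable_osdc_cost:
  assumes "online_alg M n pol"
  shows "(\<lambda>x. ennreal (osdc_cost pol n x)) \<in> borel_measurable (iid_space M n)"
proof -
  have summand: "(\<lambda>x. real (pol i x (covered pol x (i - 1))) * x i) \<in> borel_measurable (iid_space M n)"
    if i: "i \<in> {1..n}" for i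
  proof -
    have "(\<lambda>x. pol i x (covered pol x (i - 1))) \<in> measurable (iid_space M n) (count_space UNIV)"
      by (rule measurable_compose_countable[where f="\<lambda>l x. pol i x l"])
        (use online_alg_measurable[OF assms i] measurable_covered[OF assms, of "i - 1"] i in auto)
    then have "(\<lambda>x. real (pol i x (covered pol x (i - 1)))) \<in> borel_measurable (iid_space M n)"
      by (rule measurable_compose) simp
    then show ?thesis using measurable_component_iid_space[OF i] by (intro borel_measurable_times)
  qed
  show ?thesis unfolding osdc_cost_def
    by (intro measurable_compose[OF _ measurable_ennreal] borel_measurable_sum) (use summand in auto)
qed

lemma online_alg_threshold_policy: "online_alg M n (threshold_policy e n)"
  unfolding online_alg_def
proof (intro conjI ballI allI impI)
  fix i l x y assume "i \<in> {1..n}" "\<forall>j\<in>{1..i}. x j = (y :: nat \<Rightarrow> real) j"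
  then show "threshold_policy e n i x l = threshold_policy e n i y l"
    by (simp add: threshold_policy_def)
next
  fix i l assume "i \<in> {1..n}"
  note measurable_component_iid_space[OF this, measurable]
  show "(\<lambda>x. threshold_policy e n i x l) \<in> measurable (iid_space M n) (count_space UNIV)"
    unfolding threshold_policy_def by measurable
next
  fix i x assume "i \<in> {1..n}"
  then have "i \<in> {t\<in>{i - 1<..n}. t = i \<or> x i \<le> e (t - i)}" by auto
  then have "{t\<in>{i - 1<..n}. t = i \<or> x i \<le> e (t - i)} \<noteq> {}" by blast
  then show "1 \<le> threshold_policy e n i x (i - 1)"
    unfolding threshold_policy_def by (simp add: Suc_le_eq card_gt_0_iff)
qed

end

section \<open>Backward induction\<close>

locale osdc_law = cdf_distribution +
  assumes AE_nonneg: "AE x in M. 0 \<le> x"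
    and integrable_id: "integrable M (\<lambda>x. x)"
begin

lemma dval_Suc_nonneg: "0 \<le> dval C (Suc k)"
proof (induction k)
  case 0
  show ?case
    unfolding dval_cdf_Suc_0[OF integrable_id] using AE_nonneg by (rule integral_nonneg_AE)
next
  case (Suc k)
  have "AE x in M. 0 \<le> min x (dval C (Suc k))"
    using AE_nonneg by eventually_elim (simp add: Suc.IH)
  then show ?case
    unfolding dval_cdf_Suc_Suc[OF integrable_id] by (rule integral_nonneg_AE)
qed

lemma dval_nonneg: "0 \<le> dval C k"
  by (cases k) (simp_all add: dval_Suc_nonneg)

lemma dval_antimono:
  assumes "0 < a" "a \<le> b"
  shows "dval C b \<le> dval C a"
proof -
  have step: "dval C (Suc (Suc k)) \<le> dval C (Suc k)" for k
  proof -
    have "(\<integral>x. min x (dval C (Suc k)) \<partial>M) \<le> (\<integral>x. dval C (Suc k) \<partial>M)"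
      using integrable_id by (intro integral_mono) auto
    then show ?thesis
      unfolding dval_cdf_Suc_Suc[OF integrable_id] using prob_space by simp
  qed
  have "dval C (Suc (b - 1)) \<le> dval C (Suc (a - 1))"
    by (rule lift_Suc_antimono_le[where f = "\<lambda>k. dval C (Suc k)", OF step]) (use assms in simp)
  then show ?thesis
    using assms by simp
qed

lemma
  assumes "i \<le> t"
  shows integrable_residual_cost: "integrable M (residual_cost (dval C) i t)"
    and integral_residual_cost: "(\<integral>y. residual_cost (dval C) i t y \<partial>M) = dval C (Suc t - i)"
proof -
  have "integrable M (residual_cost (dval C) i t)
      \<and> (\<integral>y. residual_cost (dval C) i t y \<partial>M) = dval C (Suc t - i)"
  proof (cases "t = i")
    case True
    then have "residual_cost (dval C) i t = (\<lambda>y. y)"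
      by (auto simp: residual_cost_def)
    then show ?thesis
      using True integrable_id by (simp add: dval_cdf_Suc_0[OF integrable_id] del: dval.simps)
  next
    case False
    define k where "k = t - Suc i"
    have k: "t - i = Suc k" "Suc t - i = Suc (Suc k)"
      using False assms by (auto simp: k_def)
    then have "residual_cost (dval C) i t = (\<lambda>y. min y (dval C (Suc k)))"
      using False k by (simp add: residual_cost_def fun_eq_iff)
    then show ?thesis
      using k integrable_id by (simp add: dval_cdf_Suc_Suc[OF integrable_id] del: dval.simps)
  qed
  then show "integrable M (residual_cost (dval C) i t)"
    and "(\<integral>y. residual_cost (dval C) i t y \<partial>M) = dval C (Suc t - i)"
    by auto
qed

lemma nn_integral_sum_residual_cost:
  assumes "0 \<le> p" "i \<le> Suc l"
  shows "(\<integral>\<^sup>+ y. ennreal (p + (\<Sum>t\<in>{l<..n}. residual_cost (dval C) i t y)) \<partial>M)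
    = ennreal (p + cost_to_go (dval C) n i l)"
proof -
  have int: "integrable M (residual_cost (dval C) i t)" if "t \<in> {l<..n}" for t
    using that assms(2) by (intro integrable_residual_cost) auto
  have int_sum: "integrable M (\<lambda>y. \<Sum>t\<in>{l<..n}. residual_cost (dval C) i t y)"
    by (rule Bochner_Integration.integrable_sum) (use int in auto)
  have "AE y in M. 0 \<le> p + (\<Sum>t\<in>{l<..n}. residual_cost (dval C) i t y)"
    using AE_nonneg
  proof eventually_elim
    case (elim y)
    then have "0 \<le> residual_cost (dval C) i t y" for t
      using dval_nonneg by (simp add: residual_cost_def)
    then show ?case
      using \<open>0 \<le> p\<close> by (simp add: sum_nonneg)
  qed
  then have "(\<integral>\<^sup>+ y. ennreal (p + (\<Sum>t\<in>{l<..n}. residual_cost (dval C) i t y)) \<partial>M)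
      = ennreal (\<integral>y. p + (\<Sum>t\<in>{l<..n}. residual_cost (dval C) i t y) \<partial>M)"
    using int_sum by (intro nn_integral_eq_integral) simp_all
  also have "(\<integral>y. p + (\<Sum>t\<in>{l<..n}. residual_cost (dval C) i t y) \<partial>M)
      = p + (\<Sum>t\<in>{l<..n}. \<integral>y. residual_cost (dval C) i t y \<partial>M)"
    using int_sum int prob_space by (simp add: Bochner_Integration.integral_sum)
  also have "(\<Sum>t\<in>{l<..n}. \<integral>y. residual_cost (dval C) i t y \<partial>M) = cost_to_go (dval C) n i l"
    unfolding cost_to_go_def using assms(2) by (intro sum.cong) (auto simp: integral_residual_cost)
  finally show ?thesis .
qed

text \<open>A lower bound for the conditional expected cost of \<open>pol\<close> given \<open>X\<^sub>1, ..., X\<^bsub>i-1\<^esub>\<close>,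
  attained by the threshold policy.\<close>

definition paid_plus_cost_to_go :: "policy \<Rightarrow> nat \<Rightarrow> nat \<Rightarrow> (nat \<Rightarrow> real) \<Rightarrow> ennreal" where
  "paid_plus_cost_to_go pol n i x =
     ennreal (cost_before pol i x + cost_to_go (dval C) n i (covered pol x (i - 1)))"

lemma paid_plus_cost_to_go_first: "paid_plus_cost_to_go pol n 1 x = ennreal (\<Sum>i=1..n. dval C i)"
  by (simp add: paid_plus_cost_to_go_def cost_before_def cost_to_go_def atLeastSucAtMost_greaterThanAtMost)

lemma paid_plus_cost_to_go_last:
  assumes "online_alg M n pol"
  shows "paid_plus_cost_to_go pol n (Suc n) x = ennreal (osdc_cost pol n x)"
  using covered_ge[OF assms, of n x]
  by (simp add: paid_plus_cost_to_go_def cost_to_go_def osdc_cost_eq_cost_before)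

lemma paid_plus_cost_to_go_Suc_fun_upd:
  fixes x :: "nat \<Rightarrow> real" and y :: real
  assumes "online_alg M n pol" "i \<in> {1..n}"
  defines "l \<equiv> covered pol x (i - 1)"
  defines "T \<equiv> pol i (x(i := y)) l"
  shows "paid_plus_cost_to_go pol n (Suc i) (x(i := y))
    = ennreal (cost_before pol i x + (real T * y + cost_to_go (dval C) n (Suc i) (l + T)))"
  using covered_fun_upd[OF assms(1,2), of x y] cost_before_fun_upd[OF assms(1,2), of x y]
  by (simp add: paid_plus_cost_to_go_def l_def T_def add.assoc)

lemma AE_nonneg_fun_upd:
  "\<forall>j\<in>{1..<i}. 0 \<le> x j \<Longrightarrow> AE y in M. \<forall>j\<in>{1..<Suc i}. 0 \<le> (x(i := y)) j"
  using AE_nonneg by eventually_elim auto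

lemma paid_plus_cost_to_go_eq_nn_integral_residual_cost:
  assumes "online_alg M n pol" "i \<in> {1..n}" "\<forall>j\<in>{1..<i}. 0 \<le> x j"
  shows "paid_plus_cost_to_go pol n i x = (\<integral>\<^sup>+ y. ennreal (cost_before pol i x
    + (\<Sum>t\<in>{covered pol x (i - 1)<..n}. residual_cost (dval C) i t y)) \<partial>M)"
  using nn_integral_sum_residual_cost[OF cost_before_nonneg[OF assms(3)] le_Suc_covered[OF assms(1,2)]]
  by (simp add: paid_plus_cost_to_go_def)

lemma paid_plus_cost_to_go_le_nn_integral:
  assumes pol: "online_alg M n pol" and i: "i \<in> {1..n}" and x: "\<forall>j\<in>{1..<i}. 0 \<le> x j"
  shows "paid_plus_cost_to_go pol n i x \<le> (\<integral>\<^sup>+ y. paid_plus_cost_to_go pol n (Suc i) (x(i := y)) \<partial>M)"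
proof -
  define l where "l = covered pol x (i - 1)"
  have "AE y in M. ennreal (cost_before pol i x + (\<Sum>t\<in>{l<..n}. residual_cost (dval C) i t y))
      \<le> paid_plus_cost_to_go pol n (Suc i) (x(i := y))"
    using AE_nonneg
  proof eventually_elim
    case (elim y)
    have "i = Suc l \<Longrightarrow> 1 \<le> pol i (x(i := y)) l"
      using online_alg_forced[OF pol i, of "x(i := y)"] by (metis diff_Suc_1)
    from sum_residual_cost_le[OF le_Suc_covered[OF pol i, of x, folded l_def] this elim]
    show ?case
      unfolding paid_plus_cost_to_go_Suc_fun_upd[OF pol i] l_def[symmetric]
      by (intro ennreal_leI) simp
  qed
  then show ?thesis
    unfolding paid_plus_cost_to_go_eq_nn_integral_residual_cost[OF pol i x] l_def[symmetric]
    by (rule nn_integral_mono_AE)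
qed

lemma paid_plus_cost_to_go_threshold_policy_eq_nn_integral:
  assumes i: "i \<in> {1..n}" and x: "\<forall>j\<in>{1..<i}. 0 \<le> x j"
  defines "pol \<equiv> threshold_policy (dval C) n"
  shows "paid_plus_cost_to_go pol n i x = (\<integral>\<^sup>+ y. paid_plus_cost_to_go pol n (Suc i) (x(i := y)) \<partial>M)"
proof -
  have online: "online_alg M n pol"
    unfolding pol_def by (rule online_alg_threshold_policy)
  define l where "l = covered pol x (i - 1)"
  have "ennreal (cost_before pol i x + (\<Sum>t\<in>{l<..n}. residual_cost (dval C) i t y))
      = paid_plus_cost_to_go pol n (Suc i) (x(i := y))" for y
  proof -
    have "pol i (x(i := y)) l = card {t\<in>{l<..n}. t = i \<or> y \<le> dval C (t - i)}"
      by (simp add: pol_def threshold_policy_def)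
    with sum_residual_cost_threshold[OF dval_antimono le_Suc_covered[OF online i, of x, folded l_def],
        where n = n and y = y]
    show ?thesis
      unfolding paid_plus_cost_to_go_Suc_fun_upd[OF online i] l_def[symmetric] by simp
  qed
  then show ?thesis
    unfolding paid_plus_cost_to_go_eq_nn_integral_residual_cost[OF online i x] l_def[symmetric]
    by (intro nn_integral_cong) simp
qed

lemma expected_cost_eq_iter_nn_integral:
  assumes "online_alg M n pol"
  shows "expected_cost M n pol
    = iter_nn_integral M [1..<Suc n] (paid_plus_cost_to_go pol n (Suc n)) (\<lambda>_. undefined)"
proof -
  have paid_last: "paid_plus_cost_to_go pol n (Suc n) = (\<lambda>x. ennreal (osdc_cost pol n x))"
    using paid_plus_cost_to_go_last[OF assms] by (rule ext)
  have "set [1..<Suc n] = {1..n}" by auto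
  then have iid: "iid_space M n = PiM (set [1..<Suc n]) (\<lambda>_. M)"
    unfolding iid_space_def by (simp only:)
  show ?thesis
    unfolding paid_last expected_cost_def iid
    by (rule nn_integral_PiM_eq_iter_nn_integral)
      (use borel_measurable_osdc_cost[OF assms] in \<open>simp_all only: iid distinct_upt\<close>)
qed

theorem sum_dval_le_expected_cost:
  assumes "online_alg M n pol"
  shows "ennreal (\<Sum>i=1..n. dval C i) \<le> expected_cost M n pol"
proof -
  have "paid_plus_cost_to_go pol n 1 (\<lambda>_. undefined)
      \<le> iter_nn_integral M [1..<Suc n] (paid_plus_cost_to_go pol n (Suc n)) (\<lambda>_. undefined)"
  proof (rule iter_nn_integral_upt_induct[where P = "\<lambda>i x. \<forall>j\<in>{1..<i}. 0 \<le> x j"])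
    fix i and x :: "nat \<Rightarrow> real" assume "1 \<le> i" "i \<le> n" "\<forall>j\<in>{1..<i}. 0 \<le> x j"
    then show "paid_plus_cost_to_go pol n i x \<le> (\<integral>\<^sup>+ y. paid_plus_cost_to_go pol n (Suc i) (x(i := y)) \<partial>M)"
      by (intro paid_plus_cost_to_go_le_nn_integral[OF assms]) auto
  next
    fix i and x :: "nat \<Rightarrow> real" assume "\<forall>j\<in>{1..<i}. 0 \<le> x j"
    then show "AE y in M. \<forall>j\<in>{1..<Suc i}. 0 \<le> (x(i := y)) j"
      by (rule AE_nonneg_fun_upd)
  qed (auto intro: nn_integral_mono_AE)
  then show ?thesis
    by (simp only: paid_plus_cost_to_go_first expected_cost_eq_iter_nn_integral[OF assms])
qed

theorem expected_cost_threshold_policy: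
  "expected_cost M n (threshold_policy (dval C) n) = ennreal (\<Sum>i=1..n. dval C i)"
proof -
  let ?pol = "threshold_policy (dval C) n"
  have "paid_plus_cost_to_go ?pol n 1 (\<lambda>_. undefined)
      = iter_nn_integral M [1..<Suc n] (paid_plus_cost_to_go ?pol n (Suc n)) (\<lambda>_. undefined)"
  proof (rule iter_nn_integral_upt_induct[where P = "\<lambda>i x. \<forall>j\<in>{1..<i}. 0 \<le> x j"])
    fix i and x :: "nat \<Rightarrow> real" assume "1 \<le> i" "i \<le> n" "\<forall>j\<in>{1..<i}. 0 \<le> x j"
    then show "paid_plus_cost_to_go ?pol n i x = (\<integral>\<^sup>+ y. paid_plus_cost_to_go ?pol n (Suc i) (x(i := y)) \<partial>M)"
      by (intro paid_plus_cost_to_go_threshold_policy_eq_nn_integral) auto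
  next
    fix i and x :: "nat \<Rightarrow> real" assume "\<forall>j\<in>{1..<i}. 0 \<le> x j"
    then show "AE y in M. \<forall>j\<in>{1..<Suc i}. 0 \<le> (x(i := y)) j"
      by (rule AE_nonneg_fun_upd)
  qed (auto intro: nn_integral_cong_AE)
  then show ?thesis
    by (simp only: paid_plus_cost_to_go_first
        expected_cost_eq_iter_nn_integral[OF online_alg_threshold_policy])
qed

end

theorem mainTheorem3:
  fixes D :: "real measure" and n :: nat
  assumes "real_distribution D"
    and "AE x in D. 0 \<le> x"
    and "integrable D (\<lambda>x. x)"
    and "n \<ge> 1"
    and "strict_mono_on (cdf_support (cdf D)) (cdf D)"
    and "\<exists>F'. continuous_on (cdf_support (cdf D)) F' \<and>
           (\<forall>x\<in>cdf_support (cdf D). (cdf D has_real_derivative F' x) (at x within cdf_support (cdf D)))"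
  shows "(\<forall>pol. online_alg D n pol \<longrightarrow>
            ennreal (\<Sum>i=1..n. dval (cdf D) i) \<le> expected_cost D n pol) \<and>
         (\<exists>pol. online_alg D n pol \<and>
            expected_cost D n pol = ennreal (\<Sum>i=1..n. dval (cdf D) i))"
proof -
  interpret osdc_law D
    using assms(1-3) by (simp add: osdc_law_def osdc_law_axioms_def cdf_distribution_def)
  show ?thesis
    using sum_dval_le_expected_cost online_alg_threshold_policy expected_cost_threshold_policy
    by blast
qed

end
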